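(* Let $G$ be a finite simple complete bipartite graph $K_{m,n}$ with $m,n\ge 1$. If $G$ has a set graceful labeling (with respect to some finite set $X$), then $G$ is a star, i.e., $m=1$ or $n=1$.
   Context: All graphs are finite and simple. Let $G$ be a graph with vertex set $V$ and edge set $E$, let $X$ be a set and $\mathcal{P}(X)$ its power set. For a function $f:V\to\mathcal{P}(X)$ define $\hat f:E\to\mathcal{P}(X)$ by $\hat f(xy)=f(x)\,\Delta\, f(y)$, where $A\Delta B$ denotes the symmetric difference of sets $A$ and $B$. The function $f$ is a set graceful labeling of $G$ if both $f$ and $\hat f$ are injective and the range of $\hat f$ is exactly $\mathcal{P}(X)\setminus\{\emptyset\}$. *)

theory Defs
  imports Main
begin

definition simple_graph :: "'v set \<Rightarrow> 'v set set \<Rightarrow> bool" where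
  "simple_graph V E \<longleftrightarrow> finite V \<and> (\<forall>e\<in>E. \<exists>x y. x \<in> V \<and> y \<in> V \<and> x \<noteq> y \<and> e = {x, y})"

definition sym_diff :: "'a set \<Rightarrow> 'a set \<Rightarrow> 'a set" where
  "sym_diff A B = (A - B) \<union> (B - A)"

definition edge_label :: "('v \<Rightarrow> 'a set) \<Rightarrow> 'v set \<Rightarrow> 'a set" where
  "edge_label f e = (THE S. \<exists>x y. e = {x, y} \<and> S = sym_diff (f x) (f y))"

definition set_graceful :: "'v set \<Rightarrow> 'v set set \<Rightarrow> 'a set \<Rightarrow> ('v \<Rightarrow> 'a set) \<Rightarrow> bool" where
  "set_graceful V E X f \<longleftrightarrow>
     (\<forall>v\<in>V. f v \<subseteq> X) \<and> inj_on f V \<and> inj_on (edge_label f) E \<and>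
     edge_label f ` E = Pow X - {{}}"

definition complete_bipartite :: "'v set \<Rightarrow> 'v set set \<Rightarrow> nat \<Rightarrow> nat \<Rightarrow> bool" where
  "complete_bipartite V E m n \<longleftrightarrow>
     (\<exists>A B. A \<inter> B = {} \<and> V = A \<union> B \<and> finite A \<and> finite B \<and> card A = m \<and> card B = n \<and>
            E = {{a, b} | a b. a \<in> A \<and> b \<in> B})"

end

theory Submission
  imports Defs
begin

(* Proof idea (discrete Fourier analysis on the group (Pow X, symmetric difference)).
   For finite sets write chi Z Y = (-1)^|Z \<inter> Y|.  Each chi _ Y is a character:
   chi (Z \<Delta> W) Y = chi Z Y * chi W Y, and the characters are orthogonal:
   summing chi Z Y over all Y \<subseteq> X gives 2^|X| if Z = {} and 0 otherwise.
   Let f be a set graceful labeling of K_{m,n} with parts A, B and put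
   S_A(Y) = \<Sum>a\<in>A. chi (f a) Y, S_B(Y) likewise.  Since (a,b) \<mapsto> f a \<Delta> f b is a
   bijection from A \<times> B onto the nonempty subsets of X, multiplicativity gives
   S_A(Y) * S_B(Y) = \<Sum>{chi Z Y | {} \<noteq> Z \<subseteq> X}, which is 2^|X| - 1 for Y = {}
   and -1 otherwise.  Hence mn = 2^|X| - 1 and S_A(Y)^2 = 1 for Y \<noteq> {}.
   Parseval's identity \<Sum>Y S_A(Y)^2 = m 2^|X| (f is injective on A) then yields
   m^2 + 2^|X| - 1 = m 2^|X|, i.e. m + n = mn + 1, i.e. (m-1)(n-1) = 0.
   The file first develops the characters, then the combinatorics of K_{m,n} and
   set graceful labelings, and finally combines both. *)

definition chi :: "'a set \<Rightarrow> 'a set \<Rightarrow> int" where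
  "chi Z Y = (-1) ^ card (Z \<inter> Y)"

lemma chi_comm: "chi Z Y = chi Y Z"
  unfolding chi_def by (simp add: Int_commute)

lemma chi_empty [simp]: "chi {} Y = 1" "chi Z {} = 1"
  unfolding chi_def by simp_all

lemma sym_diff_comm: "sym_diff A B = sym_diff B A"
  unfolding sym_diff_def by blast

lemma chi_sym_diff:
  assumes "finite Z" "finite W"
  shows "chi (sym_diff Z W) Y = chi Z Y * chi W Y"
proof -
  define P where "P = Z \<inter> Y"
  define Q where "Q = W \<inter> Y"
  have fin: "finite P" "finite Q" using assms by (auto simp: P_def Q_def)
  have "sym_diff Z W \<inter> Y = (P - Q) \<union> (Q - P)"
    unfolding sym_diff_def P_def Q_def by blast
  hence sd: "card (sym_diff Z W \<inter> Y) = card (P - Q) + card (Q - P)"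
    using fin by (metis card_Un_disjoint finite_Diff Diff_disjoint Int_Diff Int_commute)
  have "card P = card (P - Q) + card (P \<inter> Q)" "card Q = card (Q - P) + card (P \<inter> Q)"
    using fin card_Diff_subset_Int[of P Q] card_Diff_subset_Int[of Q P]
      card_mono[of P "P \<inter> Q"] card_mono[of Q "P \<inter> Q"] by (auto simp: Int_commute)
  hence "card P + card Q = card (sym_diff Z W \<inter> Y) + 2 * card (P \<inter> Q)"
    using sd by simp
  hence "chi Z Y * chi W Y = (-1::int) ^ (card (sym_diff Z W \<inter> Y) + 2 * card (P \<inter> Q))"
    unfolding chi_def P_def[symmetric] Q_def[symmetric] by (metis power_add)
  thus ?thesis unfolding chi_def by (simp add: power_add power_mult)
qed

text \<open>Orthogonality: a nontrivial character sums to zero over Pow X.  Pairing Y with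
  insert z Y for a fixed z \<in> Z flips the sign of every term.\<close>

lemma sum_chi_Pow:
  assumes "finite X" "Z \<subseteq> X"
  shows "(\<Sum>Y\<in>Pow X. chi Z Y) = (if Z = {} then 2 ^ card X else 0)"
proof (cases "Z = {}")
  case True
  thus ?thesis using assms(1) by (simp add: card_Pow)
next
  case False
  then obtain z where z: "z \<in> Z" by auto
  define X' where "X' = X - {z}"
  have zX': "z \<notin> X'" and fX': "finite X'" using assms(1) by (auto simp: X'_def)
  have Pow_split: "Pow X = Pow X' \<union> insert z ` Pow X'"
    using z assms(2) Pow_insert[of z X'] by (metis X'_def insert_Diff subsetD)
  have inj: "inj_on (insert z) (Pow X')"
    using zX' unfolding inj_on_def by (metis PowD in_mono insert_ident)
  have flip: "chi Z (insert z Y) = - chi Z Y" if "Y \<in> Pow X'" for Y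
  proof -
    have "z \<notin> Y" "finite (Z \<inter> Y)" using that zX' fX' finite_subset by auto
    hence "card (Z \<inter> insert z Y) = Suc (card (Z \<inter> Y))"
      using z by (simp add: Int_insert_right)
    thus ?thesis unfolding chi_def by simp
  qed
  have "(\<Sum>Y\<in>Pow X. chi Z Y) = (\<Sum>Y\<in>Pow X'. chi Z Y) + (\<Sum>Y\<in>insert z ` Pow X'. chi Z Y)"
    unfolding Pow_split using fX' zX' by (intro sum.union_disjoint) auto
  also have "(\<Sum>Y\<in>insert z ` Pow X'. chi Z Y) = (\<Sum>Y\<in>Pow X'. chi Z (insert z Y))"
    using sum.reindex[OF inj] by simp
  also have "\<dots> = (\<Sum>Y\<in>Pow X'. - chi Z Y)"
    using flip by (rule sum.cong[OF refl])
  finally show ?thesis using False by (simp add: sum_negf)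
qed

lemma sum_chi_nonempty:
  assumes "finite X" "Y \<subseteq> X"
  shows "(\<Sum>Z\<in>Pow X - {{}}. chi Z Y) = (if Y = {} then 2 ^ card X - 1 else -1)"
proof -
  have "(\<Sum>Z\<in>Pow X - {{}}. chi Z Y) = (\<Sum>Z\<in>Pow X. chi Y Z) - 1"
    using assms(1) sum_diff1[of "Pow X" "\<lambda>Z. chi Z Y" "{}"] by (simp add: chi_comm)
  thus ?thesis using sum_chi_Pow[OF assms] by simp
qed

definition char_sum :: "('v \<Rightarrow> 'a set) \<Rightarrow> 'v set \<Rightarrow> 'a set \<Rightarrow> int" where
  "char_sum g A Y = (\<Sum>a\<in>A. chi (g a) Y)"

lemma char_sum_empty [simp]: "char_sum g A {} = int (card A)"
  unfolding char_sum_def by simp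

lemma sum_square_char_sum:
  assumes "finite X" "finite A" "inj_on g A" "\<And>a. a \<in> A \<Longrightarrow> g a \<subseteq> X"
  shows "(\<Sum>Y\<in>Pow X. char_sum g A Y ^ 2) = int (card A) * 2 ^ card X"
proof -
  have fin: "finite (g a)" if "a \<in> A" for a
    using assms(1,4) that finite_subset by blast
  have inner: "(\<Sum>Y\<in>Pow X. chi (sym_diff (g a) (g a')) Y) = (if a = a' then 2 ^ card X else 0)"
    if "a \<in> A" "a' \<in> A" for a a'
  proof -
    have "sym_diff (g a) (g a') \<subseteq> X" using assms(4) that unfolding sym_diff_def by blast
    moreover have "sym_diff (g a) (g a') = {} \<longleftrightarrow> a = a'"
      using assms(3) that unfolding sym_diff_def inj_on_def by blast
    ultimately show ?thesis using sum_chi_Pow[OF assms(1)] by simp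
  qed
  have "(\<Sum>Y\<in>Pow X. char_sum g A Y ^ 2)
        = (\<Sum>Y\<in>Pow X. \<Sum>a\<in>A. \<Sum>a'\<in>A. chi (sym_diff (g a) (g a')) Y)"
    unfolding char_sum_def power2_eq_square sum_product
    using fin by (simp add: chi_sym_diff)
  also have "\<dots> = (\<Sum>a\<in>A. \<Sum>a'\<in>A. \<Sum>Y\<in>Pow X. chi (sym_diff (g a) (g a')) Y)"
    by (subst sum.swap, rule sum.cong[OF refl], rule sum.swap)
  also have "\<dots> = (\<Sum>a\<in>A. \<Sum>a'\<in>A. if a = a' then 2 ^ card X else 0)"
    using inner by simp
  also have "\<dots> = int (card A) * 2 ^ card X"
    using assms(2) by simp
  finally show ?thesis .
qed

text \<open>The label of the edge {a, b} is f a \<Delta> f b (well defined since \<Delta> is symmetric).\<close>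

lemma edge_label_doubleton: "edge_label f {a, b} = sym_diff (f a) (f b)"
  unfolding edge_label_def
proof (rule the_equality)
  fix S assume "\<exists>x y. {a, b} = {x, y} \<and> S = sym_diff (f x) (f y)"
  then obtain x y where "{a, b} = {x, y}" "S = sym_diff (f x) (f y)" by blast
  thus "S = sym_diff (f a) (f b)" by (metis doubleton_eq_iff sym_diff_comm)
qed blast

lemma bipartite_edges_bij:
  assumes "A \<inter> B = {}"
  shows "bij_betw (\<lambda>(a, b). {a, b}) (A \<times> B) {{a, b} | a b. a \<in> A \<and> b \<in> B}"
proof (rule bij_betwI')
  fix p q assume "p \<in> A \<times> B" "q \<in> A \<times> B"
  with assms show "((\<lambda>(a, b). {a, b}) p = (\<lambda>(a, b). {a, b}) q) = (p = q)"
    by (auto simp: doubleton_eq_iff)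
qed auto

lemma graceful_bipartite_bij:
  assumes "A \<inter> B = {}" "E = {{a, b} | a b. a \<in> A \<and> b \<in> B}"
    and "set_graceful (A \<union> B) E X f"
  shows "bij_betw (\<lambda>(a, b). sym_diff (f a) (f b)) (A \<times> B) (Pow X - {{}})"
proof -
  have "bij_betw (edge_label f) E (Pow X - {{}})"
    using assms(3) unfolding set_graceful_def bij_betw_def by blast
  hence "bij_betw (edge_label f \<circ> (\<lambda>(a, b). {a, b})) (A \<times> B) (Pow X - {{}})"
    using bipartite_edges_bij[OF assms(1)] unfolding assms(2) by (rule bij_betw_trans[rotated])
  moreover have "edge_label f \<circ> (\<lambda>(a, b). {a, b}) = (\<lambda>(a, b). sym_diff (f a) (f b))"
    by (simp add: fun_eq_iff edge_label_doubleton)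
  ultimately show ?thesis by simp
qed

lemma char_sum_product:
  assumes "A \<inter> B = {}" "E = {{a, b} | a b. a \<in> A \<and> b \<in> B}"
    and "set_graceful (A \<union> B) E X f" "finite X" "Y \<subseteq> X"
  shows "char_sum f A Y * char_sum f B Y = (if Y = {} then 2 ^ card X - 1 else -1)"
proof -
  have "f v \<subseteq> X" if "v \<in> A \<union> B" for v
    using assms(3) that unfolding set_graceful_def by blast
  hence fin: "finite (f v)" if "v \<in> A \<union> B" for v
    using assms(4) that finite_subset by blast
  have "char_sum f A Y * char_sum f B Y = (\<Sum>(a, b)\<in>A \<times> B. chi (f a) Y * chi (f b) Y)"
    unfolding char_sum_def sum_product sum.cartesian_product ..
  also have "\<dots> = (\<Sum>(a, b)\<in>A \<times> B. chi (sym_diff (f a) (f b)) Y)"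
    using fin by (intro sum.cong) (auto simp: chi_sym_diff)
  also have "\<dots> = (\<Sum>Z\<in>Pow X - {{}}. chi Z Y)"
    using sum.reindex_bij_betw[OF graceful_bipartite_bij[OF assms(1-3)], of "\<lambda>Z. chi Z Y"]
    by (simp add: case_prod_unfold)
  finally show ?thesis using sum_chi_nonempty[OF assms(4,5)] by simp
qed

theorem mainTheorem1:
  fixes V :: "'v set" and E :: "'v set set" and X :: "'a set" and f :: "'v \<Rightarrow> 'a set"
    and m n :: nat
  assumes "complete_bipartite V E m n" and "m \<ge> 1" and "n \<ge> 1"
    and "finite X" and "set_graceful V E X f"
  shows "m = 1 \<or> n = 1"
proof -
  obtain A B where AB: "A \<inter> B = {}" "V = A \<union> B" "finite A" "card A = m" "card B = n"
    "E = {{a, b} | a b. a \<in> A \<and> b \<in> B}"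
    using assms(1) unfolding complete_bipartite_def by blast
  note product = char_sum_product[OF AB(1,6) assms(5)[unfolded AB(2)] assms(4)]
  define N :: int where "N = 2 ^ card X"
  have mn: "int m * int n = N - 1"
    using product[of "{}"] AB(4,5) by (simp add: N_def)
  have unit: "char_sum f A Y ^ 2 = 1" if "Y \<in> Pow X - {{}}" for Y
  proof -
    have "\<bar>char_sum f A Y * char_sum f B Y\<bar> = 1" using product[of Y] that by simp
    hence "\<bar>char_sum f A Y\<bar> = 1" by (rule abs_zmult_eq_1)
    thus ?thesis by (metis power2_abs one_power2)
  qed
  have "int m * N = (\<Sum>Y\<in>Pow X. char_sum f A Y ^ 2)"
    using sum_square_char_sum[OF assms(4) AB(3), of f] assms(5) AB(2,4)
    by (simp add: N_def set_graceful_def inj_on_Un)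
  also have "\<dots> = char_sum f A {} ^ 2 + (\<Sum>Y\<in>Pow X - {{}}. char_sum f A Y ^ 2)"
    using assms(4) by (intro sum.remove) auto
  also have "\<dots> = int m ^ 2 + (\<Sum>Y\<in>Pow X - {{}}. 1)"
    using unit AB(4) by simp
  also have "\<dots> = int m ^ 2 + (N - 1)"
    using assms(4) by (simp add: card_Pow N_def of_nat_diff)
  finally have "int m * (int m + int n) = int m * (int m * int n + 1)"
    using mn by (simp add: algebra_simps power2_eq_square)
  hence "int m + int n = int m * int n + 1"
    using assms(2) by simp
  hence "(int m - 1) * (int n - 1) = 0"
    by (simp add: algebra_simps)
  thus ?thesis by simp
qed

end
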